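(* Let $\mathcal{X}$ be a finite set, let $P_X$ be a pmf on $\mathcal{X}$ with $P_X(x)>0$ for all $x$, and let $R_X\neq P_X$ be a pmf on $\mathcal{X}$. Write $J_X=R_X-P_X$ and $K_X(x)=J_X(x)/\sqrt{P_X(x)}$, so that $R_X=P_X+J_X=P_X+\mathrm{diag}(\sqrt{P_X})K_X$. Then $$\frac{D(R_X\|P_X)}{\|K_X\|_2^2\,\|J_X\|_1}\ge \frac{\phi\!\left(\max_{A\subseteq\mathcal{X}}\min\{P_X(A),1-P_X(A)\}\right)}{4\max_{x\in\mathcal{X}}\left|\frac{J_X(x)}{P_X(x)}\right|},$$ where $\phi:[0,\tfrac12]\to\mathbb{R}$ is $\phi(p)=\frac{1}{1-2p}\log\frac{1-p}{p}$ for $p\in[0,\tfrac12)$ and $\phi(\tfrac12)=2$.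
   Context: $D(R_X\|P_X)=\sum_x R_X(x)\log(R_X(x)/P_X(x))$ is the KL divergence (natural log). $P_X(A)=\sum_{x\in A}P_X(x)$. $\|\cdot\|_p$ denotes the $\ell^p$-norm. *)

theory Defs
  imports "HOL-Analysis.Analysis"
begin

definition is_pmf :: "('a::finite \<Rightarrow> real) \<Rightarrow> bool" where
  "is_pmf p \<longleftrightarrow> (\<forall>x. p x \<ge> 0) \<and> (\<Sum>x\<in>UNIV. p x) = 1"

definition KL_div :: "('a::finite \<Rightarrow> real) \<Rightarrow> ('a \<Rightarrow> real) \<Rightarrow> real" where
  "KL_div r p = (\<Sum>x\<in>UNIV. if r x = 0 then 0 else r x * ln (r x / p x))"

definition prob_set :: "('a \<Rightarrow> real) \<Rightarrow> 'a set \<Rightarrow> real" where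
  "prob_set p A = (\<Sum>x\<in>A. p x)"

definition phi :: "real \<Rightarrow> real" where
  "phi p = (if p = 1/2 then 2 else (1 / (1 - 2*p)) * ln ((1 - p) / p))"

end

theory Submission
  imports Defs "HOL-Real_Asymp.Real_Asymp"
begin

(*
  Let A = {x. P x <= R x}, a = R(A) and b = P(A).  Merging the outcomes of A and
  of its complement can only decrease the divergence (log-sum inequality), so
  D(R||P) >= d(a||b), the binary divergence, while ||J||_1 = 2 (a - b).

  The refined binary Pinsker inequality d(a||b) >= phi(b) (a - b)^2 holds since,
  for b <= 1/2, the derivative of q |-> d(q||b) - phi(b) (q - b)^2 is concave on
  (0, 1/2] and vanishes at b and 1/2, and this excess is symmetric about q = 1/2.
  As phi is symmetric about 1/2 and decreasing on (0, 1/2], and the balance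
  constant pi satisfies min(b, 1 - b) <= pi <= 1/2, we get phi(pi) <= phi(b), hence
  D(R||P) >= phi(pi) ||J||_1^2 / 4.  Finally ||K||_2^2 = sum |J/P| |J| is at most
  max |J/P| ||J||_1.
*)

lemma ln_le_half_sub_inverse:
  fixes x :: real
  assumes "1 \<le> x"
  shows "ln x \<le> (x - 1 / x) / 2"
proof -
  have "(\<lambda>t. (t - 1 / t) / 2 - ln t) 1 \<le> (\<lambda>t. (t - 1 / t) / 2 - ln t) x"
  proof (rule DERIV_nonneg_imp_increasing_open[OF assms])
    fix t :: real
    assume t: "1 < t" "t < x"
    then have "DERIV (\<lambda>t. (t - 1 / t) / 2 - ln t) t :> (1 - 1 / t)\<^sup>2 / 2"
      by (auto intro!: derivative_eq_intros simp: field_simps power2_eq_square)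
    then show "\<exists>y. DERIV (\<lambda>t. (t - 1 / t) / 2 - ln t) t :> y \<and> y \<ge> 0"
      by force
  qed (intro continuous_intros, auto)
  then show ?thesis
    by simp
qed

lemma ln_ge_two_mul_diff_div_add:
  fixes x :: real
  assumes "1 \<le> x"
  shows "2 * (x - 1) / (x + 1) \<le> ln x"
proof -
  have "(\<lambda>t. ln t - 2 * (t - 1) / (t + 1)) 1 \<le> (\<lambda>t. ln t - 2 * (t - 1) / (t + 1)) x"
  proof (rule DERIV_nonneg_imp_increasing_open[OF assms])
    fix t :: real
    assume t: "1 < t" "t < x"
    then have "DERIV (\<lambda>t. ln t - 2 * (t - 1) / (t + 1)) t :> 1 / t - 4 / (t + 1)\<^sup>2"
      by (auto intro!: derivative_eq_intros simp: field_simps power2_eq_square)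
    moreover have "1 / t - 4 / (t + 1)\<^sup>2 = (t - 1)\<^sup>2 / (t * (t + 1)\<^sup>2)"
      using t by (simp add: divide_simps) (simp add: algebra_simps power2_eq_square)
    ultimately show "\<exists>y. DERIV (\<lambda>t. ln t - 2 * (t - 1) / (t + 1)) t :> y \<and> y \<ge> 0"
      using t by force
  qed (intro continuous_intros, auto)
  then show ?thesis
    by simp
qed

lemma mult_ln_div_mono:
  fixes x y :: real
  assumes "1 < x" "x \<le> y"
  shows "(x + 1) * ln x / (x - 1) \<le> (y + 1) * ln y / (y - 1)"
proof (rule DERIV_nonneg_imp_increasing_open[OF assms(2)])
  fix t :: real
  assume t: "x < t" "t < y"
  then have "DERIV (\<lambda>t. (t + 1) * ln t / (t - 1)) t :> ((t + 1) * (t - 1) / t - 2 * ln t) / (t - 1)\<^sup>2"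
    using assms by (auto intro!: derivative_eq_intros simp: field_simps power2_eq_square)
  moreover have "2 * ln t \<le> (t + 1) * (t - 1) / t"
    using ln_le_half_sub_inverse[of t] t assms by (simp add: field_simps)
  ultimately show "\<exists>z. DERIV (\<lambda>t. (t + 1) * ln t / (t - 1)) t :> z \<and> z \<ge> 0"
    by force
qed (use assms in \<open>intro continuous_intros, auto\<close>)

lemma phi_eq_mult_ln_div:
  fixes t :: real
  assumes "0 < t" "t < 1 / 2"
  defines "x \<equiv> (1 - t) / t"
  shows "phi t = (x + 1) * ln x / (x - 1)"
proof -
  have "x + 1 = 1 / t" "x - 1 = (1 - 2 * t) / t"
    using assms by (auto simp: field_simps)
  then show ?thesis
    using assms unfolding phi_def x_def by (simp add: field_simps)
qed

lemma phi_ge_two: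
  fixes t :: real
  assumes "0 < t" "t \<le> 1 / 2"
  shows "2 \<le> phi t"
proof (cases "t = 1 / 2")
  case True
  then show ?thesis
    unfolding phi_def by simp
next
  case False
  define x where "x = (1 - t) / t"
  have t: "t < 1 / 2"
    using assms False by simp
  then have x: "1 < x"
    using assms unfolding x_def by (simp add: field_simps)
  then have "2 * (x - 1) \<le> ln x * (x + 1)"
    using ln_ge_two_mul_diff_div_add[of x] by (simp add: divide_simps)
  then have "2 \<le> (x + 1) * ln x / (x - 1)"
    using x by (simp add: field_simps)
  then show ?thesis
    using phi_eq_mult_ln_div[OF assms(1) t] unfolding x_def by simp
qed

lemma phi_antimono:
  fixes s t :: real
  assumes "0 < s" "s \<le> t" "t \<le> 1 / 2"
  shows "phi t \<le> phi s"
proof (cases "t = 1 / 2")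
  case True
  then show ?thesis
    using phi_ge_two[of s] assms unfolding phi_def by simp
next
  case False
  then have t: "t < 1 / 2"
    using assms by simp
  have "1 < (1 - t) / t" "(1 - t) / t \<le> (1 - s) / s"
    using assms t by (simp_all add: field_simps)
  then show ?thesis
    using mult_ln_div_mono phi_eq_mult_ln_div[of t] phi_eq_mult_ln_div[of s] assms t
    by simp
qed

lemma phi_one_minus:
  fixes p :: real
  assumes "0 < p" "p < 1"
  shows "phi (1 - p) = phi p"
proof (cases "p = 1 / 2")
  case True
  then have "1 - p = p"
    by simp
  then show ?thesis
    by (simp only:)
next
  case False
  have "ln (p / (1 - p)) = - ln ((1 - p) / p)"
    using assms by (simp add: ln_divide_pos)
  then show ?thesis
    using False unfolding phi_def by (simp add: divide_simps) (simp add: algebra_simps)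
qed

lemma phi_mult_eq_ln_diff:
  fixes p :: real
  assumes "0 < p" "p < 1"
  shows "phi p * (1 - 2 * p) = ln (1 - p) - ln p"
proof (cases "p = 1 / 2")
  case True
  then have "1 - p = p"
    by simp
  with True show ?thesis
    by simp
qed (use assms in \<open>simp add: phi_def ln_divide_pos\<close>)

lemma phi_le_of_min_le:
  fixes b t :: real
  assumes "0 < b" "b < 1" "min b (1 - b) \<le> t" "t \<le> 1/2"
  shows "phi t \<le> phi b"
proof -
  have "phi t \<le> phi (min b (1 - b))"
    using assms by (intro phi_antimono) auto
  also have "phi (min b (1 - b)) = phi b"
    using phi_one_minus[of b] assms by (simp add: min_def)
  finally show ?thesis .
qed

lemma continuous_on_mult_ln: "continuous_on {0..} (\<lambda>x::real. x * ln x)"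
  unfolding continuous_on_eq_continuous_within
proof
  fix x :: real
  assume x: "x \<in> {0..}"
  show "continuous (at x within {0..}) (\<lambda>x. x * ln x)"
  proof (cases "x = 0")
    case True
    have "((\<lambda>x::real. x * ln x) \<longlongrightarrow> 0) (at_right 0)"
      by real_asymp
    then show ?thesis
      using True by (simp add: continuous_within at_within_Ici_at_right)
  next
    case False
    then have "isCont (\<lambda>x. x * ln x) x"
      using x by (auto intro!: continuous_intros)
    then show ?thesis
      by (rule continuous_at_imp_continuous_at_within)
  qed
qed

(* For 0 < p < 1 and 0 <= q <= 1 this is q ln(q/p) + (1-q) ln((1-q)/(1-p)),
   with 0 ln 0 = 0 supplied by 0 * ln 0 = 0. *)
definition binary_KL :: "real \<Rightarrow> real \<Rightarrow> real" where
  "binary_KL q p = q * (ln q - ln p) + (1 - q) * (ln (1 - q) - ln (1 - p))"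

lemma binary_KL_one_minus: "binary_KL (1 - q) (1 - p) = binary_KL q p"
  unfolding binary_KL_def by simp

lemma continuous_on_binary_KL: "continuous_on {0..1} (\<lambda>q. binary_KL q p)"
proof -
  have "continuous_on {0..1} (\<lambda>q::real. q * ln q)"
    by (rule continuous_on_subset[OF continuous_on_mult_ln]) auto
  moreover have "continuous_on {0..1} (\<lambda>q::real. (1 - q) * ln (1 - q))"
    by (rule continuous_on_compose2[OF continuous_on_mult_ln]) (auto intro!: continuous_intros)
  ultimately show ?thesis
    unfolding binary_KL_def right_diff_distrib
    by (intro continuous_on_diff continuous_on_add) (assumption | intro continuous_intros)+
qed

lemma has_real_derivative_binary_KL:
  assumes "0 < q" "q < 1"
  shows "((\<lambda>q. binary_KL q p) has_real_derivative ln q - ln (1 - q) - ln p + ln (1 - p)) (at q)"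
  unfolding binary_KL_def using assms by (auto intro!: derivative_eq_intros simp: divide_simps)

lemma has_real_derivative_binary_KL_sub_quadratic:
  assumes "0 < x" "x < 1"
  shows "((\<lambda>q. binary_KL q p - c * (q - p)\<^sup>2) has_real_derivative
           ln x - ln (1 - x) - ln p + ln (1 - p) - 2 * c * (x - p)) (at x)"
proof -
  have "((\<lambda>q. c * (q - p)\<^sup>2) has_real_derivative 2 * c * (x - p)) (at x)"
    by (auto intro!: derivative_eq_intros)
  from DERIV_diff[OF has_real_derivative_binary_KL[OF assms] this] show ?thesis .
qed

lemma binary_KL_sub_phi_reflect:
  assumes "0 < p" "p < 1"
  shows "binary_KL (1 - q) p - phi p * (1 - q - p)\<^sup>2 = binary_KL q p - phi p * (q - p)\<^sup>2"
proof -
  have "binary_KL (1 - q) p - binary_KL q p = (1 - 2 * q) * (ln (1 - p) - ln p)"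
    unfolding binary_KL_def by (simp add: algebra_simps)
  also have "\<dots> = (1 - 2 * q) * (phi p * (1 - 2 * p))"
    using phi_mult_eq_ln_diff[OF assms] by simp
  also have "\<dots> = phi p * ((1 - q - p)\<^sup>2 - (q - p)\<^sup>2)"
    by (simp add: power2_eq_square algebra_simps)
  finally show ?thesis
    by (simp add: algebra_simps)
qed

lemma has_real_derivative_ln_diff_ln_one_minus:
  fixes c d x :: real
  assumes "0 < x" "x < 1"
  shows "((\<lambda>q. ln q - ln (1 - q) - c * q + d) has_real_derivative 1 / x + 1 / (1 - x) - c) (at x)"
  using assms by (auto intro!: derivative_eq_intros simp: divide_simps)

lemma concave_on_ln_diff_ln_one_minus:
  fixes c d :: real
  shows "concave_on {0<..1/2} (\<lambda>q. ln q - ln (1 - q) - c * q + d)"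
  unfolding concave_on_def
proof (rule convex_on_realI[where f' = "\<lambda>q. c - (1 / q + 1 / (1 - q))"])
  fix q :: real
  assume "q \<in> {0<..1/2}"
  then show "((\<lambda>q. - (ln q - ln (1 - q) - c * q + d)) has_real_derivative c - (1 / q + 1 / (1 - q))) (at q)"
    using DERIV_minus[OF has_real_derivative_ln_diff_ln_one_minus[of q c d]] by simp
next
  fix x y :: real
  assume xy: "x \<in> {0<..1/2}" "y \<in> {0<..1/2}" "x \<le> y"
  have "y * (1 - y) - x * (1 - x) = (y - x) * (1 - x - y)"
    by (simp add: algebra_simps)
  moreover have "0 \<le> (y - x) * (1 - x - y)"
    using xy by (intro mult_nonneg_nonneg) auto
  ultimately have "x * (1 - x) \<le> y * (1 - y)"
    by linarith
  moreover have "0 < x * (1 - x)"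
    using xy by auto
  ultimately have "1 / (y * (1 - y)) \<le> 1 / (x * (1 - x))"
    by (simp add: frac_le)
  moreover have "1 / (z * (1 - z)) = 1 / z + 1 / (1 - z)" if "0 < z" "z < 1" for z :: real
    using that by (simp add: field_simps)
  ultimately show "c - (1 / x + 1 / (1 - x)) \<le> c - (1 / y + 1 / (1 - y))"
    using xy by simp
qed simp

lemma concave_on_nonpos_outside_zeros:
  fixes g :: "real \<Rightarrow> real"
  assumes "concave_on {x..b} g" "x \<le> c" "c < b" "g c = 0" "g b = 0"
  shows "g x \<le> 0"
proof (cases "x = c")
  case False
  then have "x < c"
    using assms(2) by simp
  have "(g b - g x) / (b - x) * (c - x) + g x \<le> g c"
    using assms(1-3) by (intro concave_onD_Icc') auto
  also have "(g b - g x) / (b - x) * (c - x) + g x = g x * ((b - c) / (b - x))"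
    using \<open>x < c\<close> assms(3,5) by (simp add: field_simps)
  finally have "g x * ((b - c) / (b - x)) \<le> 0"
    using assms(4) by simp
  moreover have "0 < (b - c) / (b - x)"
    using \<open>x < c\<close> assms(3) by simp
  ultimately show ?thesis
    using mult_pos_pos[of "g x" "(b - c) / (b - x)"] by linarith
qed (use assms in simp)

lemma ln_diff_ln_one_minus_le:
  fixes q :: real
  assumes "0 < q" "q \<le> 1/2"
  shows "ln q - ln (1 - q) \<le> 4 * q - 2"
proof -
  have "(\<lambda>q. ln q - ln (1 - q) - 4 * q + 2) q \<le> (\<lambda>q. ln q - ln (1 - q) - 4 * q + 2) (1/2)"
  proof (rule DERIV_nonneg_imp_increasing_open[OF assms(2)])
    fix x :: real
    assume x: "q < x" "x < 1/2"
    have "x * (1 - x) \<le> 1/4"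
      using zero_le_power2[of "x - 1/2"] by (simp add: algebra_simps power2_eq_square)
    then have "4 \<le> 1 / (x * (1 - x))"
      using x assms by (simp add: le_divide_eq)
    also have "1 / (x * (1 - x)) = 1 / x + 1 / (1 - x)"
      using x assms by (simp add: field_simps)
    finally show "\<exists>y. DERIV (\<lambda>q. ln q - ln (1 - q) - 4 * q + 2) x :> y \<and> 0 \<le> y"
      using has_real_derivative_ln_diff_ln_one_minus[of x 4 2] x assms by force
  qed (use assms in \<open>intro continuous_intros, auto\<close>)
  then show ?thesis
    by simp
qed

(* g is the derivative of q |-> binary_KL q p - phi p * (q - p)^2; it is concave
   on (0, 1/2] and vanishes at p and at 1/2. *)
lemma binary_KL_sub_phi_deriv_sign:
  fixes p q :: real
  assumes p: "0 < p" "p \<le> 1/2"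
  defines "g \<equiv> \<lambda>q. ln q - ln (1 - q) - ln p + ln (1 - p) - 2 * phi p * (q - p)"
  shows binary_KL_sub_phi_deriv_nonpos: "0 < q \<Longrightarrow> q \<le> p \<Longrightarrow> g q \<le> 0"
    and binary_KL_sub_phi_deriv_nonneg: "p \<le> q \<Longrightarrow> q \<le> 1/2 \<Longrightarrow> 0 \<le> g q"
proof -
  have g_eq: "g = (\<lambda>q. ln q - ln (1 - q) - 2 * phi p * q + (2 * phi p * p - ln p + ln (1 - p)))"
    unfolding g_def by (simp add: fun_eq_iff algebra_simps)
  have concave: "concave_on {s..1/2} g" if "0 < s" for s
  proof -
    have "concave_on {0<..1/2} g"
      unfolding g_eq by (rule concave_on_ln_diff_ln_one_minus)
    then show ?thesis
      unfolding concave_on_def by (rule convex_on_subset) (use that in auto)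
  qed
  have gp: "g p = 0"
    unfolding g_def by simp
  have ghalf: "g (1/2) = 0"
    using phi_mult_eq_ln_diff[of p] p unfolding g_def by (simp add: algebra_simps)
  show "g q \<le> 0" if q: "0 < q" "q \<le> p"
  proof (cases "p = 1/2")
    case True
    have "phi (1/2) = 2"
      unfolding phi_def by simp
    then show ?thesis
      using ln_diff_ln_one_minus_le[of q] q True unfolding g_def True by simp
  next
    case False
    then show ?thesis
      using concave_on_nonpos_outside_zeros[OF concave] q p gp ghalf by simp
  qed
  show "0 \<le> g q" if q: "p \<le> q" "q \<le> 1/2"
    using concave_on_ge_min[OF concave, of p q] q p gp ghalf by simp
qed

lemma binary_KL_ge_phi_lower_half:
  fixes p q :: real
  assumes p: "0 < p" "p \<le> 1/2" and q: "0 \<le> q" "q \<le> 1/2"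
  shows "phi p * (q - p)\<^sup>2 \<le> binary_KL q p"
proof -
  define f where "f = (\<lambda>q. binary_KL q p - phi p * (q - p)\<^sup>2)"
  have deriv: "DERIV f x :> ln x - ln (1 - x) - ln p + ln (1 - p) - 2 * phi p * (x - p)"
    if "0 < x" "x < 1" for x
    unfolding f_def using that by (rule has_real_derivative_binary_KL_sub_quadratic)
  have cont: "continuous_on {a..b} f" if "0 \<le> a" "b \<le> 1" for a b
    unfolding f_def using that
    by (intro continuous_on_diff continuous_on_subset[OF continuous_on_binary_KL] continuous_intros) auto
  have "f p \<le> f q"
  proof (cases "q \<le> p")
    case True
    show ?thesis
    proof (rule DERIV_nonpos_imp_decreasing_open[OF True _ cont])
      fix x
      assume "q < x" "x < p"
      then have "0 < x" "x < 1" "x \<le> p"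
        using q p by auto
      then show "\<exists>y. DERIV f x :> y \<and> y \<le> 0"
        using deriv binary_KL_sub_phi_deriv_nonpos[OF p] by blast
    qed (use q p in auto)
  next
    case False
    show ?thesis
    proof (rule DERIV_nonneg_imp_increasing_open[OF _ _ cont])
      fix x
      assume "p < x" "x < q"
      then have "0 < x" "x < 1" "p \<le> x" "x \<le> 1/2"
        using q p by auto
      then show "\<exists>y. DERIV f x :> y \<and> 0 \<le> y"
        using deriv binary_KL_sub_phi_deriv_nonneg[OF p] by blast
    qed (use False q p in auto)
  qed
  moreover have "f p = 0"
    unfolding f_def binary_KL_def by simp
  ultimately show ?thesis
    unfolding f_def by simp
qed

lemma binary_KL_ge_phi:
  fixes p q :: real
  assumes p: "0 < p" "p < 1" and q: "0 \<le> q" "q \<le> 1"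
  shows "phi p * (q - p)\<^sup>2 \<le> binary_KL q p"
proof -
  have reduced: "phi p * (q - p)\<^sup>2 \<le> binary_KL q p"
    if p: "0 < p" "p \<le> 1/2" and q: "0 \<le> q" "q \<le> 1" for p q :: real
  proof (cases "q \<le> 1/2")
    case True
    then show ?thesis
      using binary_KL_ge_phi_lower_half p q by simp
  next
    case False
    then have "phi p * (1 - q - p)\<^sup>2 \<le> binary_KL (1 - q) p"
      using binary_KL_ge_phi_lower_half[of p "1 - q"] p q by simp
    then show ?thesis
      using binary_KL_sub_phi_reflect[of p q] p by simp
  qed
  show ?thesis
  proof (cases "p \<le> 1/2")
    case True
    then show ?thesis
      using reduced p q by simp
  next
    case False
    then have "phi (1 - p) * ((1 - q) - (1 - p))\<^sup>2 \<le> binary_KL (1 - q) (1 - p)"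
      using reduced[of "1 - p" "1 - q"] p q by simp
    moreover have "((1 - q) - (1 - p))\<^sup>2 = (q - p)\<^sup>2"
      by (simp add: power2_commute)
    ultimately show ?thesis
      using phi_one_minus[OF p] binary_KL_one_minus by simp
  qed
qed

lemma mult_ln_div_ge:
  fixes r p t :: real
  assumes "0 \<le> r" "0 < p" "0 < t"
  shows "r * ln t + r - t * p \<le> r * ln (r / p)"
proof (cases "r = 0")
  case False
  then have r: "0 < r"
    using assms by simp
  have "ln (t * p / r) \<le> t * p / r - 1"
    using r assms by (intro ln_le_minus_one) simp
  moreover have "ln (t * p / r) = ln t - ln (r / p)"
    using r assms by (simp add: ln_div ln_mult)
  ultimately have "r * (ln t - ln (r / p)) \<le> r * (t * p / r - 1)"
    using r by (intro mult_left_mono) auto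
  also have "\<dots> = t * p - r"
    using r by (simp add: field_simps)
  finally show ?thesis
    by (simp add: algebra_simps)
qed (use assms in simp)

lemma log_sum_inequality:
  fixes r p :: "'a \<Rightarrow> real"
  assumes "finite S" "\<And>x. x \<in> S \<Longrightarrow> 0 < p x" "\<And>x. x \<in> S \<Longrightarrow> 0 \<le> r x"
  shows "sum r S * ln (sum r S / sum p S) \<le> (\<Sum>x\<in>S. r x * ln (r x / p x))"
proof (cases "sum r S = 0")
  case True
  then have "\<forall>x\<in>S. r x = 0"
    using assms by (simp add: sum_nonneg_eq_0_iff)
  with True show ?thesis
    by simp
next
  case False
  define a b where "a = sum r S" and "b = sum p S"
  have "S \<noteq> {}"
    using False by auto
  then have "0 < b"
    unfolding b_def using assms by (intro sum_pos) auto
  moreover have "0 < a"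
    using False assms unfolding a_def by (metis less_eq_real_def sum_nonneg)
  ultimately have "(\<Sum>x\<in>S. r x * ln (a / b) + r x - a / b * p x) \<le> (\<Sum>x\<in>S. r x * ln (r x / p x))"
    using assms by (intro sum_mono mult_ln_div_ge) auto
  moreover have "(\<Sum>x\<in>S. r x * ln (a / b) + r x - a / b * p x) = a * ln (a / b)"
    using \<open>0 < b\<close> unfolding a_def b_def
    by (simp add: sum.distrib sum_subtractf flip: sum_distrib_left sum_distrib_right sum_divide_distrib)
  ultimately show ?thesis
    unfolding a_def b_def by simp
qed

lemma sum_UNIV_split_Compl:
  fixes f :: "'a::finite \<Rightarrow> 'b::comm_monoid_add"
  shows "(\<Sum>x\<in>UNIV. f x) = sum f A + sum f (- A)"
  by (metis Compl_eq_Diff_UNIV add.commute finite sum.subset_diff subset_UNIV)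

lemma prob_set_Compl:
  assumes "is_pmf P"
  shows "prob_set P (- A) = 1 - prob_set P A"
  using assms sum_UNIV_split_Compl[of P A] unfolding is_pmf_def prob_set_def by simp

lemma prob_set_nonneg:
  assumes "is_pmf P"
  shows "0 \<le> prob_set P A"
  using assms unfolding is_pmf_def prob_set_def by (simp add: sum_nonneg)

lemma prob_set_le_one:
  assumes "is_pmf P"
  shows "prob_set P A \<le> 1"
  using prob_set_nonneg[OF assms, of "- A"] prob_set_Compl[OF assms, of A] by simp

lemma KL_div_eq_sum:
  "KL_div R P = (\<Sum>x\<in>UNIV. R x * ln (R x / P x))"
  unfolding KL_div_def by (intro sum.cong) auto

lemma KL_div_ge_binary_KL:
  fixes P R :: "'a::finite \<Rightarrow> real"
  assumes "is_pmf P" "\<forall>x. 0 < P x" "is_pmf R"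
    and "0 < prob_set P A" "prob_set P A < 1"
  shows "binary_KL (prob_set R A) (prob_set P A) \<le> KL_div R P"
proof -
  define a b where "a = prob_set R A" and "b = prob_set P A"
  have R_nonneg: "0 \<le> R x" for x
    using assms(3) unfolding is_pmf_def by simp
  have mult_ln_div: "q * ln (q / p) = q * (ln q - ln p)" if "0 \<le> q" "0 < p" for q p :: real
    using that by (cases "q = 0") (simp_all add: ln_div)
  have "binary_KL a b = a * ln (a / b) + (1 - a) * ln ((1 - a) / (1 - b))"
    using assms(3-5) unfolding binary_KL_def a_def b_def
    by (simp add: mult_ln_div prob_set_nonneg prob_set_le_one)
  also have "\<dots> \<le> (\<Sum>x\<in>A. R x * ln (R x / P x)) + (\<Sum>x\<in>- A. R x * ln (R x / P x))"
    using log_sum_inequality[of A P R] log_sum_inequality[of "- A" P R] assms(2) R_nonneg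
    unfolding a_def b_def prob_set_Compl[OF assms(1), symmetric] prob_set_Compl[OF assms(3), symmetric]
    by (simp add: prob_set_def add_mono)
  also have "\<dots> = KL_div R P"
    unfolding KL_div_eq_sum sum_UNIV_split_Compl[of _ A] ..
  finally show ?thesis
    unfolding a_def b_def .
qed

lemma sum_abs_diff_eq_prob_set:
  fixes P R :: "'a::finite \<Rightarrow> real"
  assumes "is_pmf P" "is_pmf R"
  defines "A \<equiv> {x. P x \<le> R x}"
  shows "(\<Sum>x\<in>UNIV. \<bar>R x - P x\<bar>) = 2 * (prob_set R A - prob_set P A)"
proof -
  have "(\<Sum>x\<in>UNIV. \<bar>R x - P x\<bar>) = (\<Sum>x\<in>A. R x - P x) + (\<Sum>x\<in>- A. P x - R x)"
    unfolding sum_UNIV_split_Compl[of _ A] A_def by (intro arg_cong2[where f = "(+)"] sum.cong) auto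
  also have "\<dots> = (prob_set R A - prob_set P A) + (prob_set P (- A) - prob_set R (- A))"
    unfolding prob_set_def by (simp add: sum_subtractf)
  finally show ?thesis
    using prob_set_Compl[OF assms(1)] prob_set_Compl[OF assms(2)] by simp
qed

lemma prob_set_excess_bounds:
  fixes P R :: "'a::finite \<Rightarrow> real"
  assumes "is_pmf P" "\<forall>x. 0 < P x" "is_pmf R" "R \<noteq> P"
  defines "A \<equiv> {x. P x \<le> R x}"
  shows "0 < prob_set P A" "prob_set P A < 1"
proof -
  have sums: "(\<Sum>x\<in>UNIV. R x) = (\<Sum>x\<in>UNIV. P x)"
    using assms(1,3) unfolding is_pmf_def by simp
  have "A \<noteq> {}"
  proof
    assume "A = {}"
    then have "(\<Sum>x\<in>UNIV. R x) < (\<Sum>x\<in>UNIV. P x)"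
      unfolding A_def by (intro sum_strict_mono) (auto simp: not_le)
    with sums show False
      by simp
  qed
  then show "0 < prob_set P A"
    unfolding prob_set_def using assms(2) by (intro sum_pos) auto
  have "- A \<noteq> {}"
  proof
    assume "- A = {}"
    then have "\<forall>x\<in>UNIV. 0 \<le> R x - P x"
      unfolding A_def by auto
    moreover have "(\<Sum>x\<in>UNIV. R x - P x) = 0"
      using sums by (simp add: sum_subtractf)
    ultimately have "\<forall>x. R x - P x = 0"
      using sum_nonneg_eq_0_iff[of UNIV "\<lambda>x. R x - P x"] by simp
    with assms(4) show False
      by auto
  qed
  then have "0 < prob_set P (- A)"
    unfolding prob_set_def using assms(2) by (intro sum_pos) auto
  then show "prob_set P A < 1"
    using prob_set_Compl[OF assms(1)] by simp
qed

lemma sum_sq_div_sqrt_le_Max_mult_sum_abs: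
  fixes f w :: "'a::finite \<Rightarrow> real"
  assumes "\<forall>x. 0 < w x"
  shows "(\<Sum>x\<in>UNIV. (f x / sqrt (w x))\<^sup>2) \<le> Max ((\<lambda>x. \<bar>f x / w x\<bar>) ` UNIV) * (\<Sum>x\<in>UNIV. \<bar>f x\<bar>)"
proof -
  define M where "M = Max ((\<lambda>x. \<bar>f x / w x\<bar>) ` UNIV)"
  have "(f x / sqrt (w x))\<^sup>2 \<le> M * \<bar>f x\<bar>" for x
  proof -
    have "(f x / sqrt (w x))\<^sup>2 = \<bar>f x / w x\<bar> * \<bar>f x\<bar>"
      using assms by (simp add: power_divide power2_eq_square)
    moreover have "\<bar>f x / w x\<bar> \<le> M"
      unfolding M_def by (intro Max_ge) auto
    ultimately show ?thesis
      by (metis abs_ge_zero mult_right_mono)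
  qed
  then have "(\<Sum>x\<in>UNIV. (f x / sqrt (w x))\<^sup>2) \<le> (\<Sum>x\<in>UNIV. M * \<bar>f x\<bar>)"
    by (intro sum_mono)
  then show ?thesis
    unfolding M_def by (simp add: sum_distrib_left)
qed

definition balance :: "('a::finite \<Rightarrow> real) \<Rightarrow> real" where
  "balance P = Max ((\<lambda>A. min (prob_set P A) (1 - prob_set P A)) ` UNIV)"

lemma min_prob_set_le_balance: "min (prob_set P A) (1 - prob_set P A) \<le> balance P"
  unfolding balance_def by (intro Max_ge) auto

lemma balance_le_half: "balance P \<le> 1/2"
proof -
  have "balance P \<in> (\<lambda>A. min (prob_set P A) (1 - prob_set P A)) ` UNIV"
    unfolding balance_def by (intro Max_in) auto
  then obtain A where "balance P = min (prob_set P A) (1 - prob_set P A)"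
    by blast
  then show ?thesis
    by linarith
qed

lemma phi_balance_bounds:
  assumes "0 < prob_set P A" "prob_set P A < 1"
  shows "2 \<le> phi (balance P)" "phi (balance P) \<le> phi (prob_set P A)"
proof -
  have "0 < min (prob_set P A) (1 - prob_set P A)"
    using assms by simp
  then show "2 \<le> phi (balance P)"
    using min_prob_set_le_balance[of P A] balance_le_half[of P] by (intro phi_ge_two) auto
  show "phi (balance P) \<le> phi (prob_set P A)"
    using min_prob_set_le_balance[of P A] balance_le_half[of P] assms by (intro phi_le_of_min_le) auto
qed

lemma KL_div_ge_phi_balance:
  fixes P R :: "'a::finite \<Rightarrow> real"
  assumes "is_pmf P" "\<forall>x. 0 < P x" "is_pmf R" "R \<noteq> P"
  shows "phi (balance P) * (\<Sum>x\<in>UNIV. \<bar>R x - P x\<bar>)\<^sup>2 / 4 \<le> KL_div R P"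
proof -
  define A where "A = {x. P x \<le> R x}"
  define a b where "a = prob_set R A" and "b = prob_set P A"
  have b: "0 < b" "b < 1"
    using prob_set_excess_bounds[OF assms] unfolding A_def b_def by auto
  have a: "0 \<le> a" "a \<le> 1"
    unfolding a_def using assms(3) by (simp_all add: prob_set_nonneg prob_set_le_one)
  have L1: "(\<Sum>x\<in>UNIV. \<bar>R x - P x\<bar>) = 2 * (a - b)"
    using sum_abs_diff_eq_prob_set[OF assms(1,3)] unfolding A_def a_def b_def .
  have "phi (balance P) * (\<Sum>x\<in>UNIV. \<bar>R x - P x\<bar>)\<^sup>2 / 4 = phi (balance P) * (a - b)\<^sup>2"
    unfolding L1 power_mult_distrib by simp
  also have "\<dots> \<le> phi b * (a - b)\<^sup>2"
    using phi_balance_bounds[of P A] b unfolding b_def by (intro mult_right_mono) auto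
  also have "\<dots> \<le> binary_KL a b"
    using a b by (intro binary_KL_ge_phi) auto
  also have "\<dots> \<le> KL_div R P"
    using KL_div_ge_binary_KL[OF assms(1-3)] b unfolding a_def b_def by simp
  finally show ?thesis .
qed

lemma quotient_lower_bound:
  fixes c D S M N :: real
  assumes "c * N\<^sup>2 / 4 \<le> D" "S \<le> M * N" "0 < S" "0 \<le> c" "0 \<le> N"
  shows "c / (4 * M) \<le> D / (S * N)"
proof -
  have "0 < M * N"
    using assms(2,3) by linarith
  then have "0 < M" "0 < N"
    using assms(5) by (auto simp: zero_less_mult_iff)
  have "c / (4 * M) = c * N\<^sup>2 / 4 / (M * N * N)"
    using \<open>0 < N\<close> by (simp add: power2_eq_square)
  also have "\<dots> \<le> D / (M * N * N)"
    using assms(1) \<open>0 < M\<close> \<open>0 < N\<close> by (intro divide_right_mono) auto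
  also have "\<dots> \<le> D / (S * N)"
  proof (rule divide_left_mono)
    have "0 \<le> c * N\<^sup>2 / 4"
      using assms(4) by simp
    then show "0 \<le> D"
      using assms(1) by linarith
  qed (use assms \<open>0 < N\<close> in \<open>auto intro: mult_right_mono\<close>)
  finally show ?thesis .
qed

theorem lemma2:
  fixes P R :: "'a::finite \<Rightarrow> real"
  assumes "is_pmf P" and "\<forall>x. P x > 0"
    and "is_pmf R" and "R \<noteq> P"
  defines "J \<equiv> (\<lambda>x. R x - P x)"
    and "K \<equiv> (\<lambda>x. (R x - P x) / sqrt (P x))"
  shows "KL_div R P / ((\<Sum>x\<in>UNIV. (K x)\<^sup>2) * (\<Sum>x\<in>UNIV. \<bar>J x\<bar>))
         \<ge> phi (Max ((\<lambda>A. min (prob_set P A) (1 - prob_set P A)) ` (UNIV :: 'a set set)))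
           / (4 * Max ((\<lambda>x. \<bar>J x / P x\<bar>) ` (UNIV :: 'a set)))"
proof -
  have "2 \<le> phi (balance P)"
    using phi_balance_bounds prob_set_excess_bounds[OF assms(1-4)] by blast
  moreover have "(\<Sum>x\<in>UNIV. (K x)\<^sup>2) \<le> Max ((\<lambda>x. \<bar>J x / P x\<bar>) ` UNIV) * (\<Sum>x\<in>UNIV. \<bar>J x\<bar>)"
    using sum_sq_div_sqrt_le_Max_mult_sum_abs[where f = J and w = P] assms(2)
    unfolding K_def J_def by simp
  moreover have "0 < (\<Sum>x\<in>UNIV. (K x)\<^sup>2)"
  proof -
    obtain x where "R x \<noteq> P x"
      using assms(4) by auto
    moreover have "0 < P x"
      using assms(2) by simp
    ultimately have "0 < (K x)\<^sup>2"
      unfolding K_def by simp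
    then show ?thesis
      by (intro sum_pos2[where i = x]) auto
  qed
  ultimately show ?thesis
    using KL_div_ge_phi_balance[OF assms(1-4)] unfolding J_def balance_def
    by (intro quotient_lower_bound) (auto intro: sum_nonneg)
qed

end
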